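(* Assume the axiom of choice. Let $\pi_0,\pi_1 : E\rightrightarrows V$ be a connected graph where $E$ and $V$ are both sets. Then a spanning tree for the graph merely exists.
   Context: Work in homotopy type theory. A graph is a pair of types $V,E$ with maps $\pi_0,\pi_1 : E\to V$; its coequalizer $V/E$ is the higher inductive type with points $[v]$ and paths $[\pi_0(e)]=[\pi_1(e)]$. A graph is connected if its coequalizer is a connected type, and is a tree if its coequalizer is contractible. A subgraph is a graph $D\rightrightarrows U$ with embeddings $h:D\hookrightarrow E$, $k:U\hookrightarrow V$ commuting with both endpoint maps. A spanning tree is a subgraph that is a tree, whose vertex embedding $U\hookrightarrow V$ is an equivalence, and whose edge embedding $D\hookrightarrow E$ has decidable image. *)

theory Defs
  imports Main
begin

text \<open>A graph: vertex set V, edge set E, endpoint maps s (= pi0) and t (= pi1).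
An oriented edge is a pair (e, b); b = True means traversed from s e to t e.\<close>

definition graph :: "'v set \<Rightarrow> 'e set \<Rightarrow> ('e \<Rightarrow> 'v) \<Rightarrow> ('e \<Rightarrow> 'v) \<Rightarrow> bool" where
  "graph V E s t \<longleftrightarrow> (\<forall>e\<in>E. s e \<in> V \<and> t e \<in> V)"

definition osrc :: "('e \<Rightarrow> 'v) \<Rightarrow> ('e \<Rightarrow> 'v) \<Rightarrow> 'e \<times> bool \<Rightarrow> 'v" where
  "osrc s t x = (if snd x then s (fst x) else t (fst x))"

definition otgt :: "('e \<Rightarrow> 'v) \<Rightarrow> ('e \<Rightarrow> 'v) \<Rightarrow> 'e \<times> bool \<Rightarrow> 'v" where
  "otgt s t x = (if snd x then t (fst x) else s (fst x))"

inductive walk :: "'v set \<Rightarrow> 'e set \<Rightarrow> ('e \<Rightarrow> 'v) \<Rightarrow> ('e \<Rightarrow> 'v) \<Rightarrow> 'v \<Rightarrow> ('e \<times> bool) list \<Rightarrow> 'v \<Rightarrow> bool"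
  for V E s t where
  walk_nil: "u \<in> V \<Longrightarrow> walk V E s t u [] u"
| walk_cons: "fst x \<in> E \<Longrightarrow> u \<in> V \<Longrightarrow> osrc s t x = u \<Longrightarrow> walk V E s t (otgt s t x) ws w
      \<Longrightarrow> walk V E s t u (x # ws) w"

fun reduced :: "('e \<times> bool) list \<Rightarrow> bool" where
  "reduced (x # y # ws) = ((fst x \<noteq> fst y \<or> snd x = snd y) \<and> reduced (y # ws))"
| "reduced _ = True"

text \<open>Connected: the coequalizer is connected, i.e. inhabited and any two vertices
are merely identified, i.e. joined by a walk.\<close>
definition connected_graph :: "'v set \<Rightarrow> 'e set \<Rightarrow> ('e \<Rightarrow> 'v) \<Rightarrow> ('e \<Rightarrow> 'v) \<Rightarrow> bool" where
  "connected_graph V E s t \<longleftrightarrow> V \<noteq> {} \<and> (\<forall>u\<in>V. \<forall>v\<in>V. \<exists>ws. walk V E s t u ws v)"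

text \<open>Tree: the coequalizer is contractible, i.e. inhabited and each identity type
[u] = [v] (equivalent to the set of reduced walks from u to v) is contractible.\<close>
definition is_tree :: "'v set \<Rightarrow> 'e set \<Rightarrow> ('e \<Rightarrow> 'v) \<Rightarrow> ('e \<Rightarrow> 'v) \<Rightarrow> bool" where
  "is_tree V E s t \<longleftrightarrow> V \<noteq> {} \<and>
     (\<forall>u\<in>V. \<forall>v\<in>V. \<exists>!ws. walk V E s t u ws v \<and> reduced ws)"

text \<open>Spanning tree: a subset D of the edges (decidable image is automatic classically),
all vertices kept, endpoint maps restricted, forming a tree.\<close>
definition spanning_tree :: "'v set \<Rightarrow> 'e set \<Rightarrow> ('e \<Rightarrow> 'v) \<Rightarrow> ('e \<Rightarrow> 'v) \<Rightarrow> 'e set \<Rightarrow> bool" where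
  "spanning_tree V E s t D \<longleftrightarrow> D \<subseteq> E \<and> is_tree V D s t"

end

theory Submission
  imports Defs
begin

text \<open>By Zorn's lemma there is a maximal forest, i.e. a set of edges between any two
vertices of which there is at most one reduced walk: unions of chains of forests are
forests because two walks use only finitely many edges. If the endpoints of an edge e
are not joined in a forest D, then D plus e is still a forest: a reduced walk can cross
e at most once, and the direction in which it crosses is fixed by the component of D
containing its start. So a maximal forest joins the endpoints of every edge, hence, the
graph being connected, any two vertices; together with uniqueness of reduced walks this
makes it a spanning tree.\<close>

lemma walk_in_V: "walk V D s t u ws v \<Longrightarrow> u \<in> V \<and> v \<in> V"
  by (induction rule: walk.induct) auto

lemma walk_edges: "walk V D s t u ws v \<Longrightarrow> fst ` set ws \<subseteq> D"
  by (induction rule: walk.induct) auto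

lemma walk_mono: "walk V D s t u ws v \<Longrightarrow> fst ` set ws \<subseteq> D' \<Longrightarrow> walk V D' s t u ws v"
  by (induction rule: walk.induct) (auto intro: walk.intros)

lemma walk_insert_avoiding:
  "walk V (insert e D) s t u ws v \<Longrightarrow> e \<notin> fst ` set ws \<Longrightarrow> walk V D s t u ws v"
  using walk_edges walk_mono by (metis subset_insert)

lemma walk_append: "walk V D s t u ws v \<Longrightarrow> walk V D s t v ws' w \<Longrightarrow> walk V D s t u (ws @ ws') w"
  by (induction rule: walk.induct) (auto intro: walk.intros)

lemma walk_appendE:
  assumes "walk V D s t u (ws @ ws') w"
  obtains v where "walk V D s t u ws v" "walk V D s t v ws' w"
  using assms
proof (induction ws arbitrary: u)
  case Nil
  then show ?case using walk_in_V by (fastforce intro: walk.intros)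
next
  case (Cons x ws)
  from Cons.prems(2) have "fst x \<in> D" "u \<in> V" "osrc s t x = u"
    "walk V D s t (otgt s t x) (ws @ ws') w"
    by (auto elim: walk.cases)
  with Cons.IH Cons.prems(1) show ?case by (blast intro: walk.intros)
qed

lemma walk_ConsE:
  assumes "walk V D s t u (x # ws) w"
  obtains "fst x \<in> D" "osrc s t x = u" "walk V D s t (otgt s t x) ws w"
  using assms by (auto elim: walk.cases)

lemma walk_edge:
  "e \<in> D \<Longrightarrow> s e \<in> V \<Longrightarrow> t e \<in> V \<Longrightarrow> walk V D s t (s e) [(e, True)] (t e)"
  by (auto intro!: walk.intros simp: osrc_def otgt_def)

lemma walk_rev: "walk V D s t u ws v \<Longrightarrow> walk V D s t v (rev (map (\<lambda>(e, b). (e, \<not> b)) ws)) u"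
proof (induction rule: walk.induct)
  case (walk_nil u)
  then show ?case by (auto intro: walk.intros)
next
  case (walk_cons x u ws w)
  have "walk V D s t (otgt s t x) [(fst x, \<not> snd x)] u"
    using walk_cons walk_in_V[OF walk_cons(4)]
    by (auto intro!: walk.intros simp: osrc_def otgt_def)
  with walk_cons.IH show ?case
    by (auto simp: case_prod_beta intro: walk_append)
qed

lemma reduced_ConsD: "reduced (x # ws) \<Longrightarrow> reduced ws"
  by (cases ws) auto

lemma reduced_appendD: "reduced (ws @ ws') \<Longrightarrow> reduced ws \<and> reduced ws'"
proof (induction ws)
  case (Cons x ws)
  then show ?case by (cases ws) (auto dest: reduced_ConsD)
qed simp

lemma reduced_walk_exists:
  "walk V D s t u ws v \<Longrightarrow> \<exists>ws'. walk V D s t u ws' v \<and> reduced ws'"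
proof (induction rule: walk.induct)
  case (walk_nil u)
  then show ?case by (auto intro: walk.intros)
next
  case (walk_cons x u ws w)
  then obtain ws' where ws': "walk V D s t (otgt s t x) ws' w" "reduced ws'" by blast
  show ?case
  proof (cases "\<exists>y ws''. ws' = y # ws'' \<and> fst y = fst x \<and> snd y \<noteq> snd x")
    case True
    \<comment> \<open>the walk starts by crossing x back, so dropping x and that step still leads from u to w\<close>
    then obtain y ws'' where y: "ws' = y # ws''" "fst y = fst x" "snd y \<noteq> snd x" by blast
    with ws' have "walk V D s t (otgt s t y) ws'' w" by (auto elim: walk_ConsE)
    moreover have "otgt s t y = u" using y walk_cons(3) by (auto simp: osrc_def otgt_def)
    moreover have "reduced ws''" using ws'(2) y(1) reduced_ConsD by blast
    ultimately show ?thesis by blast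
  next
    case False
    then have "reduced (x # ws')" using ws'(2) by (cases ws') auto
    then show ?thesis using walk_cons ws' by (blast intro: walk.intros)
  qed
qed

definition joined :: "'v set \<Rightarrow> 'e set \<Rightarrow> ('e \<Rightarrow> 'v) \<Rightarrow> ('e \<Rightarrow> 'v) \<Rightarrow> 'v \<Rightarrow> 'v \<Rightarrow> bool" where
  "joined V D s t u v \<longleftrightarrow> (\<exists>ws. walk V D s t u ws v)"

lemma joined_sym: "joined V D s t u v \<Longrightarrow> joined V D s t v u"
  unfolding joined_def by (metis walk_rev)

lemma joined_trans: "joined V D s t u v \<Longrightarrow> joined V D s t v w \<Longrightarrow> joined V D s t u w"
  unfolding joined_def by (metis walk_append)

lemma joined_osrc_otgt_iff:
  "joined V D s t (osrc s t x) (otgt s t x) \<longleftrightarrow> joined V D s t (s (fst x)) (t (fst x))"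
  using joined_sym by (cases "snd x") (auto simp: osrc_def otgt_def)

definition forest :: "'v set \<Rightarrow> 'e set \<Rightarrow> ('e \<Rightarrow> 'v) \<Rightarrow> ('e \<Rightarrow> 'v) \<Rightarrow> bool" where
  "forest V D s t \<longleftrightarrow> (\<forall>u v ws ws'. walk V D s t u ws v \<longrightarrow> reduced ws \<longrightarrow>
     walk V D s t u ws' v \<longrightarrow> reduced ws' \<longrightarrow> ws = ws')"

lemma forestD:
  "forest V D s t \<Longrightarrow> walk V D s t u ws v \<Longrightarrow> reduced ws \<Longrightarrow>
   walk V D s t u ws' v \<Longrightarrow> reduced ws' \<Longrightarrow> ws = ws'"
  unfolding forest_def by blast

lemma forest_empty: "forest V {} s t"
proof -
  have "ws = []" if "walk V {} s t u ws v" for u ws v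
    using that by (cases rule: walk.cases) auto
  then show ?thesis unfolding forest_def by blast
qed

lemma forest_Union_chain:
  assumes "subset.chain A C" "C \<noteq> {}" "\<forall>D\<in>C. forest V D s t"
  shows "forest V (\<Union>C) s t"
  unfolding forest_def
proof (intro allI impI)
  fix u v ws ws'
  assume ws: "walk V (\<Union>C) s t u ws v" "reduced ws"
    and ws': "walk V (\<Union>C) s t u ws' v" "reduced ws'"
  have edges: "fst ` set ws \<union> fst ` set ws' \<subseteq> \<Union>C"
    using walk_edges[OF ws(1)] walk_edges[OF ws'(1)] by (rule Un_least)
  obtain D where D: "D \<in> C" "fst ` set ws \<union> fst ` set ws' \<subseteq> D"
    by (rule finite_subset_Union_chain[OF _ edges assms(2,1)]) auto
  have walks: "walk V D s t u ws v" "walk V D s t u ws' v"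
    using walk_mono[OF ws(1)] walk_mono[OF ws'(1)] D(2) by auto
  have "forest V D s t" using assms(3) D(1) by blast
  then show "ws = ws'" using walks(1) ws(2) walks(2) ws'(2) by (rule forestD)
qed

lemma maximal_forestE:
  obtains D where "D \<subseteq> E" "forest V D s t"
    "\<And>X. X \<subseteq> E \<Longrightarrow> D \<subseteq> X \<Longrightarrow> forest V X s t \<Longrightarrow> X = D"
proof -
  let ?A = "{D. D \<subseteq> E \<and> forest V D s t}"
  have "?A \<noteq> {}" using forest_empty by blast
  moreover have "\<Union>C \<in> ?A" if "C \<noteq> {}" "subset.chain ?A C" for C
    using forest_Union_chain[OF that(2,1)] that(2) by (auto simp: subset.chain_def)
  ultimately obtain M where "M \<in> ?A" "\<forall>X\<in>?A. M \<subseteq> X \<longrightarrow> X = M"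
    using subset_Zorn_nonempty[of ?A] by blast
  then show thesis by (intro that[of M]) auto
qed

lemma walk_split_first_crossing:
  assumes "walk V (insert e D) s t u ws v" "e \<in> fst ` set ws"
  obtains p x q where "ws = p @ x # q" "fst x = e" "walk V D s t u p (osrc s t x)"
    "walk V (insert e D) s t (otgt s t x) q v"
proof -
  have "\<exists>x\<in>set ws. fst x = e" using assms(2) by auto
  then obtain p x q where pxq: "ws = p @ x # q" "fst x = e" "\<forall>y\<in>set p. fst y \<noteq> e"
    using split_list_first_prop[of ws "\<lambda>x. fst x = e"] by blast
  from assms(1) pxq(1) obtain m where
    p: "walk V (insert e D) s t u p m" and xq: "walk V (insert e D) s t m (x # q) v"
    by (auto elim: walk_appendE)
  from xq have "osrc s t x = m" "walk V (insert e D) s t (otgt s t x) q v"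
    by (auto elim: walk_ConsE)
  moreover have "walk V D s t u p m"
    using walk_insert_avoiding[OF p] pxq(3) by auto
  ultimately show thesis using that pxq(1,2) by simp
qed

lemma reduced_walk_crosses_bridge_once:
  assumes forest: "forest V D s t" and bridge: "\<not> joined V D s t (s e) (t e)"
    and x: "fst x = e" and q: "walk V (insert e D) s t (otgt s t x) q v"
    and reduced: "reduced (x # q)"
  shows "walk V D s t (otgt s t x) q v"
proof (cases "e \<in> fst ` set q")
  case False
  then show ?thesis using walk_insert_avoiding[OF q] by blast
next
  case True
  then obtain r y q' where ryq: "q = r @ y # q'" "fst y = e"
    and r: "walk V D s t (otgt s t x) r (osrc s t y)"
    using walk_split_first_crossing[OF q] by metis
  show ?thesis
  proof (cases "snd y = snd x")
    case True
    then have "y = x" using x ryq(2) by (simp add: prod_eq_iff)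
    then have "joined V D s t (otgt s t x) (osrc s t x)"
      using r unfolding joined_def by blast
    then have "joined V D s t (osrc s t x) (otgt s t x)"
      by (rule joined_sym)
    then show ?thesis using bridge x joined_osrc_otgt_iff by blast
  next
    case False
    \<comment> \<open>then r is a closed reduced walk in the forest D, hence empty, and x is undone by y\<close>
    then have "osrc s t y = otgt s t x"
      using x ryq(2) by (cases "snd x") (auto simp: osrc_def otgt_def)
    with r have closed: "walk V D s t (otgt s t x) r (otgt s t x)" by simp
    moreover have "reduced r"
      using reduced ryq(1) by (auto dest: reduced_ConsD reduced_appendD)
    ultimately have "r = []"
      using forestD[OF forest closed _ walk.walk_nil] walk_in_V[OF closed] by simp
    then show ?thesis using reduced ryq x False by simp
  qed
qed

lemma reduced_walk_across_bridgeE: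
  assumes forest: "forest V D s t" and bridge: "\<not> joined V D s t (s e) (t e)"
    and ws: "walk V (insert e D) s t u ws v" and reduced: "reduced ws"
  obtains "walk V D s t u ws v"
  | p x q where "ws = p @ x # q" "fst x = e" "walk V D s t u p (osrc s t x)"
      "walk V D s t (otgt s t x) q v"
proof (cases "e \<in> fst ` set ws")
  case False
  then show thesis using that(1) walk_insert_avoiding[OF ws] by blast
next
  case True
  then obtain p x q where pxq: "ws = p @ x # q" "fst x = e" "walk V D s t u p (osrc s t x)"
    and q: "walk V (insert e D) s t (otgt s t x) q v"
    using walk_split_first_crossing[OF ws] by metis
  have "reduced (x # q)" using reduced reduced_appendD pxq(1) by blast
  then show thesis
    using that(2)[OF pxq] reduced_walk_crosses_bridge_once[OF forest bridge pxq(2) q] by blast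
qed

lemma bridge_crossing_direction:
  assumes bridge: "\<not> joined V D s t (s e) (t e)" and x: "fst x = e"
    and p: "walk V D s t u p (osrc s t x)"
  shows "snd x \<longleftrightarrow> joined V D s t u (s e)"
proof -
  have "joined V D s t u (osrc s t x)" using p unfolding joined_def by blast
  then show ?thesis
    using bridge x by (cases "snd x") (auto simp: osrc_def intro: joined_sym joined_trans)
qed

lemma bridge_crossing_not_joined:
  assumes bridge: "\<not> joined V D s t (s e) (t e)" and x: "fst x = e"
    and "walk V D s t u p (osrc s t x)" "walk V D s t (otgt s t x) q v"
  shows "\<not> joined V D s t u v"
proof
  assume "joined V D s t u v"
  moreover have "joined V D s t u (osrc s t x)" "joined V D s t (otgt s t x) v"
    using assms(3,4) unfolding joined_def by blast+
  ultimately have "joined V D s t (osrc s t x) (otgt s t x)"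
    by (meson joined_sym joined_trans)
  then show False using bridge x joined_osrc_otgt_iff by blast
qed

lemma bridge_crossing_walks_eq:
  assumes forest: "forest V D s t" and bridge: "\<not> joined V D s t (s e) (t e)"
    and p: "walk V D s t u p (osrc s t x)" and q: "walk V D s t (otgt s t x) q v" and x: "fst x = e"
    and p': "walk V D s t u p' (osrc s t x')" and q': "walk V D s t (otgt s t x') q' v"
    and x': "fst x' = e"
    and "reduced (p @ x # q)" "reduced (p' @ x' # q')"
  shows "p @ x # q = p' @ x' # q'"
proof -
  have "x = x'"
    using x x' bridge_crossing_direction[OF bridge] p p' by (simp add: prod_eq_iff)
  moreover have "reduced p" "reduced q" "reduced p'" "reduced q'"
    using assms(9,10) by (auto dest: reduced_appendD reduced_ConsD)
  ultimately have "p = p'" "q = q'"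
    using forestD[OF forest p] forestD[OF forest q] p' q' by auto
  with \<open>x = x'\<close> show ?thesis by simp
qed

lemma forest_insert_bridge:
  assumes forest: "forest V D s t" and bridge: "\<not> joined V D s t (s e) (t e)"
  shows "forest V (insert e D) s t"
  unfolding forest_def
proof (intro allI impI)
  fix u v ws ws'
  assume ws: "walk V (insert e D) s t u ws v" "reduced ws"
    and ws': "walk V (insert e D) s t u ws' v" "reduced ws'"
  show "ws = ws'"
  proof (rule reduced_walk_across_bridgeE[OF forest bridge ws])
    assume w: "walk V D s t u ws v"
    show ?thesis
    proof (rule reduced_walk_across_bridgeE[OF forest bridge ws'])
      assume "walk V D s t u ws' v"
      then show ?thesis using forestD[OF forest w ws(2) _ ws'(2)] by blast
    next
      fix p' x' q'
      assume "walk V D s t u p' (osrc s t x')" "walk V D s t (otgt s t x') q' v" "fst x' = e"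
      with w show ?thesis using bridge_crossing_not_joined[OF bridge] unfolding joined_def by blast
    qed
  next
    fix p x q
    assume pxq: "ws = p @ x # q" "fst x = e" "walk V D s t u p (osrc s t x)"
      "walk V D s t (otgt s t x) q v"
    show ?thesis
    proof (rule reduced_walk_across_bridgeE[OF forest bridge ws'])
      assume "walk V D s t u ws' v"
      then show ?thesis
        using bridge_crossing_not_joined[OF bridge pxq(2-4)] unfolding joined_def by blast
    next
      fix p' x' q'
      assume "ws' = p' @ x' # q'" "fst x' = e" "walk V D s t u p' (osrc s t x')"
        "walk V D s t (otgt s t x') q' v"
      then show ?thesis
        using bridge_crossing_walks_eq[OF forest bridge pxq(3,4,2)] pxq(1) ws(2) ws'(2) by simp
    qed
  qed
qed

lemma maximal_forest_joins_edges:
  assumes "graph V E s t" and forest: "D \<subseteq> E" "forest V D s t"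
    and maximal: "\<And>X. X \<subseteq> E \<Longrightarrow> D \<subseteq> X \<Longrightarrow> forest V X s t \<Longrightarrow> X = D"
    and e: "e \<in> E"
  shows "joined V D s t (s e) (t e)"
proof (rule ccontr)
  assume bridge: "\<not> joined V D s t (s e) (t e)"
  have "insert e D = D"
    using forest e by (intro maximal forest_insert_bridge[OF forest(2) bridge]) auto
  moreover have "s e \<in> V" "t e \<in> V" using assms(1) e by (auto simp: graph_def)
  ultimately have "walk V D s t (s e) [(e, True)] (t e)" by (auto intro: walk_edge)
  with bridge show False unfolding joined_def by blast
qed

lemma joined_if_edges_joined:
  assumes "walk V E s t u ws v" and "\<And>e. e \<in> E \<Longrightarrow> joined V D s t (s e) (t e)"
  shows "joined V D s t u v"
  using assms(1)
proof (induction rule: walk.induct)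
  case (walk_nil u)
  then show ?case unfolding joined_def by (blast intro: walk.intros)
next
  case (walk_cons x u ws w)
  have "joined V D s t u (otgt s t x)"
    using assms(2)[OF walk_cons(1)] joined_osrc_otgt_iff walk_cons(3) by metis
  then show ?case using walk_cons.IH by (rule joined_trans)
qed

lemma is_tree_if_connected_forest:
  assumes "V \<noteq> {}" "forest V D s t" "\<forall>u\<in>V. \<forall>v\<in>V. joined V D s t u v"
  shows "is_tree V D s t"
  unfolding is_tree_def
proof (intro conjI ballI)
  fix u v assume "u \<in> V" "v \<in> V"
  then obtain ws0 where "walk V D s t u ws0 v"
    using assms(3) unfolding joined_def by blast
  then have "\<exists>ws. walk V D s t u ws v \<and> reduced ws"
    by (rule reduced_walk_exists)
  then show "\<exists>!ws. walk V D s t u ws v \<and> reduced ws"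
    using forestD[OF assms(2)] by blast
qed (rule assms(1))

theorem lemma4p7:
  fixes V :: "'v set" and E :: "'e set" and s t :: "'e \<Rightarrow> 'v"
  assumes "graph V E s t"
    and "connected_graph V E s t"
  shows "\<exists>D. spanning_tree V E s t D"
proof -
  obtain D where D: "D \<subseteq> E" "forest V D s t"
    and maximal: "\<And>X. X \<subseteq> E \<Longrightarrow> D \<subseteq> X \<Longrightarrow> forest V X s t \<Longrightarrow> X = D"
    using maximal_forestE[where E = E and V = V and s = s and t = t] by blast
  have edges_joined: "joined V D s t (s e) (t e)" if "e \<in> E" for e
    using maximal_forest_joins_edges[OF assms(1) D maximal that] .
  have "joined V D s t u v" if uv: "u \<in> V" "v \<in> V" for u v
  proof -
    obtain ws where "walk V E s t u ws v"
      using assms(2) uv unfolding connected_graph_def by blast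
    then show ?thesis using edges_joined by (rule joined_if_edges_joined)
  qed
  then have "is_tree V D s t"
    using assms(2) by (intro is_tree_if_connected_forest D(2)) (auto simp: connected_graph_def)
  then show ?thesis using D(1) unfolding spanning_tree_def by blast
qed

end
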